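(* For every positive integer $r$, with $m=2^r$, the matrix $S_r$ is the incidence matrix of a $2$-$(m,m/2,m/2-1)$ block design; that is, the collection of blocks $\mathcal{J}_b=\{a:(S_r)_{a,b}=1\}$, $b=1,\dots,2^{r+1}-2$, is a $2$-$(m,m/2,m/2-1)$ block design on $\{1,\dots,m\}$.
   Context: Define $\{0,1\}$-matrices $S_r$ recursively. Let $S_1=I_2$. For $r\ge1$ let $F_r=I_{2^r-1}\otimes\begin{pmatrix}0&1\\1&0\end{pmatrix}$, and let $1_r$, $0_r$ denote the $2^r\times1$ all-ones and all-zeros column vectors. For $r\ge2$ set $S_r=\big(B_r^{(i)}\ B_r^{(ii)}\ B_r^{(iii)}\big)$ (horizontal concatenation) with $$B_r^{(i)}=\begin{pmatrix}1_{r-1}&0_{r-1}\\0_{r-1}&1_{r-1}\end{pmatrix},\quad B_r^{(ii)}=\begin{pmatrix}S_{r-1}\\S_{r-1}\end{pmatrix},\quad B_r^{(iii)}=\begin{pmatrix}S_{r-1}\\S_{r-1}F_{r-1}\end{pmatrix}.$$ $S_r$ is a $2^r\times(2^{r+1}-2)$ matrix. A $2$-$(m,l,\lambda)$ block design is a collection of $l$-element subsets (blocks) of $\{1,\dots,m\}$ such that every $2$-element subset of $\{1,\dots,m\}$ is contained in exactly $\lambda$ blocks; the incidence matrix of a sequence of subsets $\mathcal{J}_1,\dots,\mathcal{J}_n$ is the $m\times n$ matrix with $(a,b)$-entry $1$ if $a\in\mathcal{J}_b$ and $0$ otherwise. *)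

theory Defs
  imports Main
begin

text \<open>Matrices are represented as functions nat => nat => nat with 0-based
  row and column indices; the dimensions are tracked explicitly.\<close>

definition idm :: "nat \<Rightarrow> nat \<Rightarrow> nat \<Rightarrow> nat" where
  "idm n = (\<lambda>i j. if i = j \<and> i < n then 1 else 0)"

definition swap2 :: "nat \<Rightarrow> nat \<Rightarrow> nat" where
  "swap2 = (\<lambda>i j. if i < 2 \<and> j < 2 \<and> i \<noteq> j then 1 else 0)"

definition kron :: "(nat \<Rightarrow> nat \<Rightarrow> nat) \<Rightarrow> (nat \<Rightarrow> nat \<Rightarrow> nat) \<Rightarrow> nat \<Rightarrow> nat
    \<Rightarrow> nat \<Rightarrow> nat \<Rightarrow> nat" where
  "kron A B s t = (\<lambda>i j. A (i div s) (j div t) * B (i mod s) (j mod t))"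

definition matmul :: "(nat \<Rightarrow> nat \<Rightarrow> nat) \<Rightarrow> (nat \<Rightarrow> nat \<Rightarrow> nat) \<Rightarrow> nat
    \<Rightarrow> nat \<Rightarrow> nat \<Rightarrow> nat" where
  "matmul A B k = (\<lambda>i j. \<Sum>l<k. A i l * B l j)"

definition Fm :: "nat \<Rightarrow> nat \<Rightarrow> nat \<Rightarrow> nat" where
  "Fm r = kron (idm (2^r - 1)) swap2 2 2"

text \<open>S_r for r >= 1 (S 0 is a dummy value). For r >= 2, with n = 2^(r-1)
  and c = 2^r - 2 the number of columns of S_{r-1}:
  columns 0,1 form B(i), columns 2..c+1 form B(ii), the rest form B(iii).\<close>
fun S :: "nat \<Rightarrow> nat \<Rightarrow> nat \<Rightarrow> nat" where
  "S 0 = (\<lambda>i j. 0)"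
| "S (Suc 0) = idm 2"
| "S (Suc (Suc q)) = (\<lambda>a b.
     (let n = 2 ^ Suc q; c = 2 ^ Suc (Suc q) - 2 in
      if b = 0 then (if a < n then 1 else 0)
      else if b = 1 then (if a < n then 0 else 1)
      else if b < 2 + c then
        (if a < n then S (Suc q) a (b - 2) else S (Suc q) (a - n) (b - 2))
      else
        (if a < n then S (Suc q) a (b - 2 - c)
         else matmul (S (Suc q)) (Fm (Suc q)) c (a - n) (b - 2 - c))))"

text \<open>A 2-(m,l,lambda) design given by the sequence of blocks J_1..J_nb
  (counted with multiplicity) on the point set {1..m}.\<close>
definition is_2_design :: "nat \<Rightarrow> nat \<Rightarrow> nat \<Rightarrow> (nat \<Rightarrow> nat set) \<Rightarrow> nat \<Rightarrow> bool" where
  "is_2_design m l lam J nb \<longleftrightarrow>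
     (\<forall>b\<in>{1..nb}. J b \<subseteq> {1..m} \<and> card (J b) = l) \<and>
     (\<forall>x\<in>{1..m}. \<forall>y\<in>{1..m}. x \<noteq> y \<longrightarrow>
        card {b\<in>{1..nb}. {x, y} \<subseteq> J b} = lam)"

end

theory Submission
  imports Defs
begin

text \<open>Columns 2k and 2k+1 of S_r are complementary: this holds for S_1 = I_2 and is
  preserved by the recursion because F_r swaps exactly these column pairs, so every row of S_r
  has 2^r - 1 ones. In S_(r+1), two rows from the same half share 1 + 2 lambda_r columns, while a
  top row x and a bottom row y share the sum over j of S_r(x,j) (S_r(y,j) + S_r(y,j')), j' the
  partner of j, which by complementarity is the row sum 2^r - 1 of S_r. Column sums double at
  each step, so by induction blocks have size 2^(r-1) and distinct points lie in
  2^(r-1) - 1 common blocks.\<close>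

definition pair_swap :: "nat \<Rightarrow> nat" where
  "pair_swap j = (if even j then Suc j else j - 1)"

lemma pair_swap_even [simp]: "pair_swap (2 * k) = 2 * k + 1"
  and pair_swap_odd [simp]: "pair_swap (Suc (2 * k)) = 2 * k"
  and pair_swap_0 [simp]: "pair_swap 0 = 1"
  and pair_swap_1 [simp]: "pair_swap (Suc 0) = 0"
  by (simp_all add: pair_swap_def)

lemma pair_swap_pair_swap [simp]: "pair_swap (pair_swap j) = j"
  unfolding pair_swap_def by presburger

lemma pair_swap_less: "j < 2 * K \<Longrightarrow> pair_swap j < 2 * K"
  unfolding pair_swap_def by presburger

lemma pair_swap_add_even: "even c \<Longrightarrow> pair_swap (c + j) = c + pair_swap j"
  unfolding pair_swap_def by presburger

lemma sum_lessThan_pairs: "(\<Sum>j<2 * K. f j) = (\<Sum>k<K. f (2 * k) + f (2 * k + 1))"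
  for f :: "nat \<Rightarrow> 'a::comm_monoid_add"
  by (induction K) (simp_all add: algebra_simps)

lemma sum_pair_swap_reindex: "(\<Sum>j<2 * K. f (pair_swap j)) = (\<Sum>j<2 * K. f j)"
  for f :: "nat \<Rightarrow> 'a::comm_monoid_add"
  by (simp add: sum_lessThan_pairs add.commute)

lemma sum_complementary_pairs:
  fixes f :: "nat \<Rightarrow> nat"
  assumes "\<And>j. j < 2 * K \<Longrightarrow> f j + f (pair_swap j) = 1"
  shows "(\<Sum>j<2 * K. f j) = K"
proof -
  have "(\<Sum>j<2 * K. f j) = (\<Sum>k<K. f (2 * k) + f (2 * k + 1))"
    by (rule sum_lessThan_pairs)
  also have "\<dots> = (\<Sum>k<K. 1)"
  proof (rule sum.cong)
    fix k assume "k \<in> {..<K}"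
    then show "f (2 * k) + f (2 * k + 1) = 1" using assms[of "2 * k"] by simp
  qed simp
  finally show ?thesis by simp
qed

lemma sum_lessThan_add: "(\<Sum>j<a + k. f j) = (\<Sum>j<a. f j) + (\<Sum>j<k. f (a + j))"
  for f :: "nat \<Rightarrow> 'a::comm_monoid_add"
  by (induction k) (simp_all add: add.assoc)

lemma sum_lessThan_double: "(\<Sum>a<2 * n. f a) = (\<Sum>a<n. f a) + (\<Sum>a<n. f (n + a))"
  for f :: "nat \<Rightarrow> nat"
  by (simp only: mult_2 sum_lessThan_add)

lemma less_double_cases:
  fixes a n :: nat
  assumes "a < 2 * n" "a < n \<Longrightarrow> P" "\<And>a'. a = n + a' \<Longrightarrow> a' < n \<Longrightarrow> P"
  shows P
  using assms(1,2) assms(3)[of "a - n"] by (cases "a < n") auto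

lemma matmul_kron_swap2:
  assumes "j < 2 * K"
  shows "matmul A (kron (idm K) swap2 2 2) (2 * K) a j = A a (pair_swap j)"
proof -
  have entry: "kron (idm K) swap2 2 2 l j = (if l = pair_swap j then 1 else 0)"
    if "l < 2 * K" for l
  proof -
    obtain k where "j = 2 * k \<or> j = 2 * k + 1" by (metis evenE oddE)
    then have "l = pair_swap j \<longleftrightarrow> l div 2 = j div 2 \<and> l mod 2 \<noteq> j mod 2"
      by (auto simp: pair_swap_def) presburger+
    moreover have "l div 2 < K" using that by linarith
    ultimately show ?thesis
      unfolding kron_def idm_def swap2_def by auto
  qed
  have "matmul A (kron (idm K) swap2 2 2) (2 * K) a j
      = (\<Sum>l<2 * K. if l = pair_swap j then A a l else 0)"
    unfolding matmul_def by (rule sum.cong) (auto simp: entry)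
  also have "\<dots> = A a (pair_swap j)"
    using pair_swap_less[OF assms] by simp
  finally show ?thesis .
qed

lemma matmul_Fm:
  assumes "j < 2 ^ Suc r - 2"
  shows "matmul A (Fm r) (2 ^ Suc r - 2) a j = A a (pair_swap j)"
proof -
  have "(2::nat) ^ Suc r - 2 = 2 * (2 ^ r - 1)" by simp
  then show ?thesis
    using matmul_kron_swap2[of j "2 ^ r - 1" A a] assms unfolding Fm_def by simp
qed

lemma card_ones_eq_sum:
  fixes f :: "nat \<Rightarrow> nat"
  assumes "\<And>i. i < k \<Longrightarrow> f i \<le> 1"
  shows "card {i\<in>{..<k}. f i = 1} = (\<Sum>i<k. f i)"
proof -
  have "card {i\<in>{..<k}. f i = 1} = (\<Sum>i<k. if f i = 1 then 1 else 0)"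
    by (simp add: sum.If_cases Int_def conj_commute)
  also have "\<dots> = (\<Sum>i<k. f i)"
    using assms by (intro sum.cong) (auto simp: le_Suc_eq)
  finally show ?thesis .
qed

lemma card_filter_Suc_shift:
  fixes k :: nat
  shows "card {i\<in>{1..k}. P (i - 1)} = card {i\<in>{..<k}. P i}"
proof -
  have "{1..k} = Suc ` {..<k}" by (simp add: image_Suc_lessThan)
  then have "{i\<in>{1..k}. P (i - 1)} = Suc ` {i\<in>{..<k}. P i}" by auto
  then show ?thesis by (simp add: card_image)
qed

lemma is_2_design_incidence:
  fixes A :: "nat \<Rightarrow> nat \<Rightarrow> nat"
  assumes zero_one: "\<And>a b. a < m \<Longrightarrow> b < nb \<Longrightarrow> A a b \<le> 1"
    and column_sum: "\<And>b. b < nb \<Longrightarrow> (\<Sum>a<m. A a b) = l"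
    and row_product: "\<And>x y. x < m \<Longrightarrow> y < m \<Longrightarrow> x \<noteq> y \<Longrightarrow> (\<Sum>b<nb. A x b * A y b) = lam"
  shows "is_2_design m l lam (\<lambda>b. {a\<in>{1..m}. A (a - 1) (b - 1) = 1}) nb"
proof -
  have block_size: "card {a\<in>{1..m}. A (a - 1) (b - 1) = 1} = l" if "b \<in> {1..nb}" for b
  proof -
    have b: "b - 1 < nb" using that by auto
    have "card {a\<in>{1..m}. A (a - 1) (b - 1) = 1} = card {a\<in>{..<m}. A a (b - 1) = 1}"
      by (rule card_filter_Suc_shift)
    also have "\<dots> = (\<Sum>a<m. A a (b - 1))"
      using zero_one b by (intro card_ones_eq_sum)
    also have "\<dots> = l"
      using column_sum b by blast
    finally show ?thesis .
  qed
  have pair_count: "card {b\<in>{1..nb}. {x, y} \<subseteq> {a\<in>{1..m}. A (a - 1) (b - 1) = 1}} = lam"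
    if "x \<in> {1..m}" "y \<in> {1..m}" "x \<noteq> y" for x y
  proof -
    let ?xy = "\<lambda>b. A (x - 1) b * A (y - 1) b"
    have "{b\<in>{1..nb}. {x, y} \<subseteq> {a\<in>{1..m}. A (a - 1) (b - 1) = 1}}
        = {b\<in>{1..nb}. ?xy (b - 1) = 1}"
      using that by auto
    then have "card {b\<in>{1..nb}. {x, y} \<subseteq> {a\<in>{1..m}. A (a - 1) (b - 1) = 1}}
        = card {b\<in>{..<nb}. ?xy b = 1}"
      by (simp only: card_filter_Suc_shift[where P = "\<lambda>b. ?xy b = 1"])
    also have "\<dots> = (\<Sum>b<nb. ?xy b)"
    proof (rule card_ones_eq_sum)
      fix b assume "b < nb"
      then show "?xy b \<le> 1"
        using zero_one[of "x - 1" b] zero_one[of "y - 1" b] that by (auto simp: le_Suc_eq)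
    qed
    also have "\<dots> = lam"
      using row_product[of "x - 1" "y - 1"] that by auto
    finally show ?thesis .
  qed
  show ?thesis
    unfolding is_2_design_def using block_size pair_count by blast
qed

definition S_invariants :: "nat \<Rightarrow> bool" where
  "S_invariants r \<longleftrightarrow>
    (\<forall>a<2 ^ r. \<forall>b<2 ^ (r + 1) - 2. S r a b + S r a (pair_swap b) = 1) \<and>
    (\<forall>b<2 ^ (r + 1) - 2. (\<Sum>a<2 ^ r. S r a b) = 2 ^ r div 2) \<and>
    (\<forall>x<2 ^ r. \<forall>y<2 ^ r. x \<noteq> y \<longrightarrow>
       (\<Sum>b<2 ^ (r + 1) - 2. S r x b * S r y b) = 2 ^ r div 2 - 1)"

declare S.simps(3) [simp del]

lemma S_invariants_1: "S_invariants 1"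
  unfolding S_invariants_def
  by (simp add: idm_def less_2_cases_iff lessThan_Suc numeral_2_eq_2 All_less_Suc)

text \<open>In the step from S_(q+1) to S_(q+2), n = 2^(q+1) is the number of rows and c the
  number of columns of S_(q+1).\<close>

context
  fixes q n c :: nat
  assumes n_def: "n = 2 ^ Suc q" and c_def: "c = 2 * n - 2"
begin

lemma S_step_dims: "2 ^ Suc (Suc q) = 2 * n" "2 ^ (Suc (Suc q) + 1) - 2 = 2 + c + c"
  "2 ^ Suc (Suc q) - 2 = c" "2 ^ Suc (Suc q) div 2 = n"
proof -
  have "n \<ge> 2" by (simp add: n_def)
  moreover have "2 ^ Suc (Suc q) = 2 * n" "2 ^ (Suc (Suc q) + 1) = 4 * n"
    by (simp_all add: n_def)
  ultimately show "2 ^ Suc (Suc q) = 2 * n" "2 ^ (Suc (Suc q) + 1) - 2 = 2 + c + c"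
    "2 ^ Suc (Suc q) - 2 = c" "2 ^ Suc (Suc q) div 2 = n"
    unfolding c_def by linarith+
qed

lemma c_eq_double: "c = 2 * (n - 1)"
  using c_def by simp

text \<open>The block recursion of S, stated in the normal form that simp produces from
  column indices 2 + j and 2 + c + j.\<close>

lemma S_step_top:
  assumes "a < n"
  shows "S (Suc (Suc q)) a 0 = 1" "S (Suc (Suc q)) a (Suc 0) = 0"
    "j < c \<Longrightarrow> S (Suc (Suc q)) a (Suc (Suc j)) = S (Suc q) a j"
    "S (Suc (Suc q)) a (Suc (Suc (c + j))) = S (Suc q) a j"
  using assms S_step_dims(3) by (simp_all add: n_def Let_def S.simps(3))

lemma S_step_bottom:
  shows "S (Suc (Suc q)) (n + a) 0 = 0" "S (Suc (Suc q)) (n + a) (Suc 0) = 1"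
    "j < c \<Longrightarrow> S (Suc (Suc q)) (n + a) (Suc (Suc j)) = S (Suc q) a j"
    "j < c \<Longrightarrow> S (Suc (Suc q)) (n + a) (Suc (Suc (c + j))) = S (Suc q) a (pair_swap j)"
  using S_step_dims(3) matmul_Fm[of _ "Suc q" "S (Suc q)" a]
  by (simp_all add: n_def Let_def S.simps(3))

lemma S_step_columns_cases:
  assumes "b < 2 + c + c" "b = 0 \<Longrightarrow> P" "b = 1 \<Longrightarrow> P"
    "\<And>j. b = 2 + j \<Longrightarrow> j < c \<Longrightarrow> P" "\<And>j. b = 2 + c + j \<Longrightarrow> j < c \<Longrightarrow> P"
  shows P
proof -
  consider "b = 0" | "b = 1" | "2 \<le> b \<and> b < 2 + c" | "2 + c \<le> b" by linarith
  then show ?thesis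
    using assms assms(4)[of "b - 2"] assms(5)[of "b - 2 - c"] by cases auto
qed

lemma sum_S_step_columns:
  "(\<Sum>b<2 + c + c. f b) = f 0 + f 1 + (\<Sum>j<c. f (2 + j)) + (\<Sum>j<c. f (2 + c + j))"
  for f :: "nat \<Rightarrow> nat"
proof -
  have "{..<2::nat} = {0, 1}" by auto
  then show ?thesis
    using sum_lessThan_add[of f "2 + c" c] sum_lessThan_add[of f 2 c] by simp
qed

context
  assumes IH: "S_invariants (Suc q)"
begin

lemma S_complementary:
  "a < n \<Longrightarrow> j < c \<Longrightarrow> S (Suc q) a j + S (Suc q) a (pair_swap j) = 1"
  using IH S_step_dims unfolding S_invariants_def n_def by simp

lemma S_column_sum: "j < c \<Longrightarrow> (\<Sum>a<n. S (Suc q) a j) = n div 2"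
  using IH S_step_dims unfolding S_invariants_def n_def by simp

lemma S_row_product:
  "x < n \<Longrightarrow> y < n \<Longrightarrow> x \<noteq> y \<Longrightarrow> (\<Sum>j<c. S (Suc q) x j * S (Suc q) y j) = n div 2 - 1"
  using IH S_step_dims unfolding S_invariants_def n_def by simp

lemma pair_swap_less_c: "j < c \<Longrightarrow> pair_swap j < c"
  using pair_swap_less[of j "n - 1"] c_eq_double by simp

lemma S_row_sum: "x < n \<Longrightarrow> (\<Sum>j<c. S (Suc q) x j) = n - 1"
  using sum_complementary_pairs[of "n - 1" "S (Suc q) x"] S_complementary c_eq_double by simp

lemma S_step_complementary:
  assumes "a < 2 * n" "b < 2 + c + c"
  shows "S (Suc (Suc q)) a b + S (Suc (Suc q)) a (pair_swap b) = 1"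
  using assms(2)
proof (rule S_step_columns_cases)
  fix j assume b: "b = 2 + j" "j < c"
  then have "pair_swap b = 2 + pair_swap j"
    using pair_swap_add_even[of 2 j] by simp
  with assms(1) b show ?thesis
    by (elim less_double_cases) (auto simp: S_step_top S_step_bottom pair_swap_less_c S_complementary)
next
  fix j assume b: "b = 2 + c + j" "j < c"
  then have "pair_swap b = 2 + c + pair_swap j"
    using pair_swap_add_even[of "2 + c" j] c_eq_double by simp
  moreover have "S (Suc q) a' (pair_swap j) + S (Suc q) a' j = 1" if "a' < n" for a'
    using S_complementary[OF that pair_swap_less_c[OF b(2)]] by simp
  ultimately show ?thesis using assms(1) b
    by (elim less_double_cases) (auto simp: S_step_top S_step_bottom pair_swap_less_c S_complementary)
qed (use assms(1) in \<open>elim less_double_cases; simp add: S_step_top S_step_bottom\<close>)+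

lemma S_step_column_sum:
  assumes "b < 2 + c + c"
  shows "(\<Sum>a<2 * n. S (Suc (Suc q)) a b) = n"
proof -
  have "even n" by (simp add: n_def)
  then have half: "n div 2 + n div 2 = n" by auto
  show ?thesis using assms
    by (rule S_step_columns_cases)
      (simp_all add: sum_lessThan_double S_step_top S_step_bottom S_column_sum pair_swap_less_c half)
qed

lemma S_step_row_product_mixed:
  assumes "x < n" "y < n"
  shows "(\<Sum>b<2 + c + c. S (Suc (Suc q)) x b * S (Suc (Suc q)) (n + y) b) = n - 1"
proof -
  have "(\<Sum>b<2 + c + c. S (Suc (Suc q)) x b * S (Suc (Suc q)) (n + y) b)
      = (\<Sum>j<c. S (Suc q) x j * S (Suc q) y j) + (\<Sum>j<c. S (Suc q) x j * S (Suc q) y (pair_swap j))"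
    using assms unfolding sum_S_step_columns by (simp add: S_step_top S_step_bottom)
  also have "\<dots> = (\<Sum>j<c. S (Suc q) x j * (S (Suc q) y j + S (Suc q) y (pair_swap j)))"
    by (simp add: sum.distrib[symmetric] distrib_left)
  also have "\<dots> = (\<Sum>j<c. S (Suc q) x j)"
    using assms by (intro sum.cong) (auto simp: S_complementary)
  finally show ?thesis using S_row_sum[OF assms(1)] by simp
qed

lemma S_step_row_product_top:
  assumes "x < n" "y < n" "x \<noteq> y"
  shows "(\<Sum>b<2 + c + c. S (Suc (Suc q)) x b * S (Suc (Suc q)) y b) = n - 1"
proof -
  have "n \<ge> 2" "even n" using n_def by simp_all
  moreover have "(\<Sum>b<2 + c + c. S (Suc (Suc q)) x b * S (Suc (Suc q)) y b)
      = 1 + 2 * (\<Sum>j<c. S (Suc q) x j * S (Suc q) y j)"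
    using assms unfolding sum_S_step_columns by (simp add: S_step_top)
  ultimately show ?thesis using S_row_product[OF assms] by (auto elim: evenE)
qed

lemma S_step_row_product_bottom:
  assumes "x < n" "y < n" "x \<noteq> y"
  shows "(\<Sum>b<2 + c + c. S (Suc (Suc q)) (n + x) b * S (Suc (Suc q)) (n + y) b) = n - 1"
proof -
  have "n \<ge> 2" "even n" using n_def by simp_all
  moreover have "(\<Sum>j<c. S (Suc q) x (pair_swap j) * S (Suc q) y (pair_swap j))
      = (\<Sum>j<c. S (Suc q) x j * S (Suc q) y j)"
    using sum_pair_swap_reindex[where K = "n - 1" and f = "\<lambda>j. S (Suc q) x j * S (Suc q) y j"]
    by (simp add: c_eq_double)
  then have "(\<Sum>b<2 + c + c. S (Suc (Suc q)) (n + x) b * S (Suc (Suc q)) (n + y) b)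
      = 1 + 2 * (\<Sum>j<c. S (Suc q) x j * S (Suc q) y j)"
    unfolding sum_S_step_columns by (simp add: S_step_bottom)
  ultimately show ?thesis using S_row_product[OF assms] by (auto elim: evenE)
qed

lemma S_step_row_product:
  assumes "x < 2 * n" "y < 2 * n" "x \<noteq> y"
  shows "(\<Sum>b<2 + c + c. S (Suc (Suc q)) x b * S (Suc (Suc q)) y b) = n - 1"
  using assms(1)
proof (rule less_double_cases)
  assume x: "x < n"
  show ?thesis using assms(2)
  proof (rule less_double_cases)
    assume "y < n"
    with x assms(3) show ?thesis by (intro S_step_row_product_top)
  next
    fix y' assume "y = n + y'" "y' < n"
    with S_step_row_product_mixed[OF x \<open>y' < n\<close>] show ?thesis by simp
  qed
next
  fix x' assume x: "x = n + x'" "x' < n"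
  show ?thesis using assms(2)
  proof (rule less_double_cases)
    assume "y < n"
    then show ?thesis
      using x S_step_row_product_mixed[of y x'] by (simp add: mult.commute)
  next
    fix y' assume "y = n + y'" "y' < n"
    with x assms(3) S_step_row_product_bottom[of x' y'] show ?thesis by simp
  qed
qed

lemma S_invariants_step: "S_invariants (Suc (Suc q))"
  unfolding S_invariants_def S_step_dims
  using S_step_complementary S_step_column_sum S_step_row_product by simp

end

end

lemma S_invariants: "r \<ge> 1 \<Longrightarrow> S_invariants r"
proof (induction r rule: nat_induct_at_least)
  case base
  show ?case by (rule S_invariants_1)
next
  case (Suc r)
  then obtain q where "r = Suc q" by (cases r) auto
  with Suc.IH show ?case by (simp add: S_invariants_step)
qed

theorem proposition4p4:
  fixes r :: nat
  assumes "r \<ge> 1"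
  defines "m \<equiv> 2 ^ r"
  shows "(\<forall>a<m. \<forall>b<2 ^ (r + 1) - 2. S r a b \<in> {0, 1}) \<and>
         is_2_design m (m div 2) (m div 2 - 1)
           (\<lambda>b. {a\<in>{1..m}. S r (a - 1) (b - 1) = 1}) (2 ^ (r + 1) - 2)"
proof -
  have invs: "S_invariants r" using assms(1) by (rule S_invariants)
  have zero_one: "S r a b \<le> 1" if "a < m" "b < 2 ^ (r + 1) - 2" for a b
    using invs that unfolding S_invariants_def m_def by fastforce
  show ?thesis
  proof
    show "\<forall>a<m. \<forall>b<2 ^ (r + 1) - 2. S r a b \<in> {0, 1}"
      using zero_one by (auto simp: le_Suc_eq)
    show "is_2_design m (m div 2) (m div 2 - 1)
        (\<lambda>b. {a\<in>{1..m}. S r (a - 1) (b - 1) = 1}) (2 ^ (r + 1) - 2)"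
      using invs zero_one unfolding S_invariants_def m_def
      by (intro is_2_design_incidence) auto
  qed
qed

end
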